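(* Let $V$ be a finite-dimensional complex vector space, $\dim V=N$, with a direct sum decomposition $V=U\oplus W$, and let $V_\bullet=\{0\subset V_1\subset\dots\subset V_N=V\}$ be a full flag in $V$. Then there exist bases $\{e_1,\dots,e_N\}$ and $\{v_1,\dots,v_N\}$ of $V$ such that $\{e_1,\dots,e_N\}$ is compatible with the decomposition $V=U\oplus W$, $\{v_1,\dots,v_N\}$ is compatible with the flag $V_\bullet$, and each vector $v_i$ is equal either to some $e_l$ or to a sum $e_j+e_k$ with $e_j\in U$ and $e_k\in W$.
   Context: A full flag $V_\bullet$ in $V$ is a chain of subspaces $0\subset V_1\subset\dots\subset V_N=V$ with $\dim V_i=i$. A basis of $V$ is compatible with the flag $V_\bullet$ if every $V_i$ is spanned by some subset of the basis. A basis of $V$ is compatible with the decomposition $V=U\oplus W$ if each basis vector lies in $U$ or in $W$. *)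

theory Defs
  imports "HOL-Analysis.Analysis"
begin

definition full_flag :: "(nat \<Rightarrow> (complex ^ 'n) set) \<Rightarrow> bool" where
  "full_flag F \<longleftrightarrow>
     (\<forall>i\<le>CARD('n). vec.subspace (F i) \<and> vec.dim (F i) = i) \<and>
     (\<forall>i<CARD('n). F i \<subseteq> F (Suc i)) \<and>
     F CARD('n) = UNIV"

definition is_basis :: "(complex ^ 'n) set \<Rightarrow> bool" where
  "is_basis B \<longleftrightarrow> vec.independent B \<and> vec.span B = UNIV"

definition compatible_flag :: "(complex ^ 'n) set \<Rightarrow> (nat \<Rightarrow> (complex ^ 'n) set) \<Rightarrow> bool" where
  "compatible_flag B F \<longleftrightarrow> (\<forall>i\<in>{1..CARD('n)}. \<exists>S\<subseteq>B. vec.span S = F i)"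

definition compatible_decomp :: "(complex ^ 'n) set \<Rightarrow> (complex ^ 'n) set \<Rightarrow> (complex ^ 'n) set \<Rightarrow> bool" where
  "compatible_decomp B U W \<longleftrightarrow> (\<forall>b\<in>B. b \<in> U \<or> b \<in> W)"

definition direct_sum_decomp :: "(complex ^ 'n) set \<Rightarrow> (complex ^ 'n) set \<Rightarrow> bool" where
  "direct_sum_decomp U W \<longleftrightarrow> vec.subspace U \<and> vec.subspace W \<and> U \<inter> W = {0} \<and>
     {u + w | u w. u \<in> U \<and> w \<in> W} = UNIV"

end

theory Submission
  imports Defs
begin

(* Let p be the projection onto U along W, and say that a vector jumps at
   step i of the flag if it lies in F i but not in F (i - 1).  A step is "pure" if some
   vector of U or of W jumps there, and "mixed" otherwise.  For a mixed step j pick a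
   vector lead j jumping at step j whose U-component p (lead j) lies in the smallest
   possible flag space F k; this k is the level of j.  Minimality shows that
   p (lead j) jumps at step k, so the level of a mixed step is pure, and that distinct
   mixed steps have distinct levels.  The flag basis consists of one jump vector per
   step: lead j at a mixed step j, p (lead j) at its level, and a vector of U or W at
   every other step.  The split basis consists of its pure members together with the
   W-components lead j - p (lead j); so every flag vector is either a member of the
   split basis or the sum p (lead j) + (lead j - p (lead j)) of two of them. *)


lemma span_insert_fills_subspace:
  fixes S T :: "('a::field ^ 'n) set"
  assumes "vec.subspace T" "S \<subseteq> T" "y \<in> T" "y \<notin> vec.span S"
    and "vec.dim T = Suc (vec.dim S)"
  shows "vec.span (insert y S) = T"
proof -
  have "vec.dim (insert y S) = vec.dim T"
    using assms(4,5) vec.dim_insert[of y S] by simp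
  then have "vec.span (insert y S) = vec.span T"
    using assms(2,3) by (intro vec.dim_eq_span) auto
  then show ?thesis
    using assms(1) by simp
qed

lemma notin_subspace_diff_scale:
  fixes A :: "('a::field ^ 'n) set"
  assumes "vec.subspace A" "x \<notin> A" "y \<in> A"
  shows "x - c *s y \<notin> A"
proof
  assume "x - c *s y \<in> A"
  then have "(x - c *s y) + c *s y \<in> A"
    using assms(1,3) vec.subspace_add vec.subspace_scale by blast
  then show False
    using assms(2) by simp
qed

lemma is_basis_if_spanning_card_le:
  fixes E :: "(complex ^ 'n) set"
  assumes "vec.span E = UNIV" "finite E" "card E \<le> CARD('n)"
  shows "is_basis E"
proof -
  have "vec.dim (UNIV :: (complex ^ 'n) set) = CARD('n)"
    by (rule vec_dim_card)
  then show ?thesis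
    using assms vec.card_le_dim_spanning[of E UNIV] unfolding is_basis_def by auto
qed


lemma full_flag_subspace:
  fixes F :: "nat \<Rightarrow> (complex ^ 'n) set"
  assumes "full_flag F" "i \<le> CARD('n)"
  shows "vec.subspace (F i)" "vec.dim (F i) = i"
  using assms unfolding full_flag_def by blast+

lemma full_flag_top:
  fixes F :: "nat \<Rightarrow> (complex ^ 'n) set"
  assumes "full_flag F"
  shows "F CARD('n) = UNIV"
  using assms unfolding full_flag_def by blast

lemma full_flag_mono:
  fixes F :: "nat \<Rightarrow> (complex ^ 'n) set"
  assumes "full_flag F" "i \<le> j" "j \<le> CARD('n)"
  shows "F i \<subseteq> F j"
  using assms(2,3)
proof (induction j)
  case (Suc j)
  then have "F j \<subseteq> F (Suc j)"
    using assms(1) unfolding full_flag_def by auto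
  then show ?case
    using Suc by (cases "i = Suc j") auto
qed simp

lemma full_flag_bot:
  fixes F :: "nat \<Rightarrow> (complex ^ 'n) set"
  assumes "full_flag F"
  shows "F 0 = {0}"
  using full_flag_subspace(2)[OF assms, of 0] full_flag_subspace(1)[OF assms, of 0]
    vec.dim_eq_0 vec.subspace_0 by auto

lemma full_flag_jump_exists:
  fixes F :: "nat \<Rightarrow> (complex ^ 'n) set"
  assumes "full_flag F" "k \<in> {1..CARD('n)}"
  shows "\<exists>y\<in>F k. y \<notin> F (k - 1)"
proof (rule ccontr)
  assume "\<not> (\<exists>y\<in>F k. y \<notin> F (k - 1))"
  then have "vec.dim (F k) \<le> vec.dim (F (k - 1))"
    by (intro vec.dim_subset) auto
  then show False
    using assms full_flag_subspace(2)[OF assms(1), of k]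
      full_flag_subspace(2)[OF assms(1), of "k - 1"] by auto
qed

lemma full_flag_step:
  fixes F :: "nat \<Rightarrow> (complex ^ 'n) set"
  assumes "full_flag F" "k \<in> {1..CARD('n)}" "vec.span S = F (k - 1)"
    and "y \<in> F k" "y \<notin> F (k - 1)"
  shows "vec.span (insert y S) = F k"
proof (rule span_insert_fills_subspace)
  show "vec.subspace (F k)"
    using assms(1,2) full_flag_subspace by auto
  show "S \<subseteq> F k"
    using vec.span_superset[of S] full_flag_mono[OF assms(1), of "k - 1" k] assms(2,3) by auto
  have "vec.dim S = k - 1"
    using vec.dim_span[of S] assms(2,3) full_flag_subspace(2)[OF assms(1), of "k - 1"] by auto
  then show "vec.dim (F k) = Suc (vec.dim S)"
    using assms(2) full_flag_subspace(2)[OF assms(1), of k] by auto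
qed (use assms in auto)

lemma full_flag_span_jumps:
  fixes F :: "nat \<Rightarrow> (complex ^ 'n) set" and v :: "nat \<Rightarrow> complex ^ 'n"
  assumes "full_flag F" "\<And>i. i \<in> {1..CARD('n)} \<Longrightarrow> v i \<in> F i \<and> v i \<notin> F (i - 1)"
    and "i \<le> CARD('n)"
  shows "vec.span (v ` {1..i}) = F i"
  using assms(3)
proof (induction i)
  case 0
  then show ?case
    using full_flag_bot[OF assms(1)] by simp
next
  case (Suc i)
  have "v ` {1..Suc i} = insert (v (Suc i)) (v ` {1..i})"
    by (auto simp: atLeastAtMostSuc_conv)
  then show ?case
    using Suc assms(2)[of "Suc i"] full_flag_step[OF assms(1), of "Suc i" "v ` {1..i}"] by simp
qed

lemma full_flag_jumps_basis:
  fixes F :: "nat \<Rightarrow> (complex ^ 'n) set" and v :: "nat \<Rightarrow> complex ^ 'n"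
  assumes "full_flag F" "\<And>i. i \<in> {1..CARD('n)} \<Longrightarrow> v i \<in> F i \<and> v i \<notin> F (i - 1)"
  shows "is_basis (v ` {1..CARD('n)})" "compatible_flag (v ` {1..CARD('n)}) F"
proof -
  have span: "vec.span (v ` {1..CARD('n)}) = UNIV"
    using full_flag_span_jumps[of F v, OF assms] full_flag_top[OF assms(1)] by simp
  show "is_basis (v ` {1..CARD('n)})"
    using is_basis_if_spanning_card_le[OF span] card_image_le[of "{1..CARD('n)}" v] by simp
  show "compatible_flag (v ` {1..CARD('n)}) F"
    unfolding compatible_flag_def
  proof
    fix i assume "i \<in> {1..CARD('n)}"
    then have "v ` {1..i} \<subseteq> v ` {1..CARD('n)}" "vec.span (v ` {1..i}) = F i"
      using full_flag_span_jumps[of F v, OF assms] by auto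
    then show "\<exists>S\<subseteq>v ` {1..CARD('n)}. vec.span S = F i" by blast
  qed
qed


definition proj_along :: "(complex ^ 'n) set \<Rightarrow> (complex ^ 'n) set \<Rightarrow> complex ^ 'n \<Rightarrow> complex ^ 'n"
  where "proj_along U W z = (SOME u. u \<in> U \<and> z - u \<in> W)"

lemma proj_along:
  assumes "direct_sum_decomp U W"
  shows "proj_along U W z \<in> U" "z - proj_along U W z \<in> W"
proof -
  obtain u w where "z = u + w" "u \<in> U" "w \<in> W"
    using assms unfolding direct_sum_decomp_def by blast
  then have "\<exists>u. u \<in> U \<and> z - u \<in> W"
    by (intro exI[of _ u]) auto
  from someI_ex[OF this] show "proj_along U W z \<in> U" "z - proj_along U W z \<in> W"
    unfolding proj_along_def by auto
qed

lemma proj_along_unique: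
  assumes "direct_sum_decomp U W" "u \<in> U" "z - u \<in> W"
  shows "proj_along U W z = u"
proof -
  have sub: "vec.subspace U" "vec.subspace W" and triv: "U \<inter> W = {0}"
    using assms(1) unfolding direct_sum_decomp_def by auto
  have "proj_along U W z - u \<in> U"
    using proj_along[OF assms(1)] assms(2) sub(1) vec.subspace_diff by blast
  moreover have "proj_along U W z - u = (z - u) - (z - proj_along U W z)" by simp
  then have "proj_along U W z - u \<in> W"
    using proj_along[OF assms(1)] assms(3) sub(2) vec.subspace_diff by metis
  ultimately have "proj_along U W z - u \<in> U \<inter> W"
    by blast
  then show ?thesis
    using triv by simp
qed

lemma proj_along_diff_scale:
  assumes "direct_sum_decomp U W"
  shows "proj_along U W (a - c *s b) = proj_along U W a - c *s proj_along U W b"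
proof (rule proj_along_unique[OF assms])
  have sub: "vec.subspace U" "vec.subspace W"
    using assms unfolding direct_sum_decomp_def by auto
  show "proj_along U W a - c *s proj_along U W b \<in> U"
    using proj_along[OF assms] sub(1) vec.subspace_diff vec.subspace_scale by blast
  have "(a - proj_along U W a) - c *s (b - proj_along U W b) \<in> W"
    using proj_along[OF assms] sub(2) vec.subspace_diff vec.subspace_scale by blast
  moreover have "(a - proj_along U W a) - c *s (b - proj_along U W b)
      = a - c *s b - (proj_along U W a - c *s proj_along U W b)"
    by (simp add: vec.scale_right_diff_distrib)
  ultimately show "a - c *s b - (proj_along U W a - c *s proj_along U W b) \<in> W"
    by (simp only:)
qed


locale flag_and_decomp =
  fixes U W :: "(complex ^ 'n) set" and F :: "nat \<Rightarrow> (complex ^ 'n) set"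
  assumes decomp: "direct_sum_decomp U W" and flag: "full_flag F"
begin

abbreviation p :: "complex ^ 'n \<Rightarrow> complex ^ 'n" where "p \<equiv> proj_along U W"

definition mixed :: "nat \<Rightarrow> bool" where
  "mixed i \<longleftrightarrow> i \<in> {1..CARD('n)} \<and> \<not> (\<exists>y\<in>F i. y \<notin> F (i - 1) \<and> (y \<in> U \<or> y \<in> W))"

definition level :: "nat \<Rightarrow> nat" where
  "level j = (LEAST k. \<exists>x\<in>F j. x \<notin> F (j - 1) \<and> p x \<in> F k)"

definition lead :: "nat \<Rightarrow> complex ^ 'n" where
  "lead j = (SOME x. x \<in> F j \<and> x \<notin> F (j - 1) \<and> p x \<in> F (level j))"

lemma level_le:
  "x \<in> F j \<Longrightarrow> x \<notin> F (j - 1) \<Longrightarrow> p x \<in> F k \<Longrightarrow> level j \<le> k"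
  unfolding level_def by (rule Least_le) blast

lemma lead:
  assumes "j \<in> {1..CARD('n)}"
  shows "lead j \<in> F j" "lead j \<notin> F (j - 1)" "p (lead j) \<in> F (level j)"
    and "level j \<le> CARD('n)"
proof -
  obtain y where y: "y \<in> F j" "y \<notin> F (j - 1)"
    using full_flag_jump_exists[OF flag assms] by blast
  then have "p y \<in> F CARD('n)"
    using full_flag_top[OF flag] by blast
  with y show "level j \<le> CARD('n)"
    by (rule level_le)
  have "\<exists>x\<in>F j. x \<notin> F (j - 1) \<and> p x \<in> F (level j)"
    unfolding level_def by (rule LeastI) (use y \<open>p y \<in> F CARD('n)\<close> in blast)
  then have "\<exists>x. x \<in> F j \<and> x \<notin> F (j - 1) \<and> p x \<in> F (level j)"
    by blast
  from someI_ex[OF this]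
  show "lead j \<in> F j" "lead j \<notin> F (j - 1)" "p (lead j) \<in> F (level j)"
    unfolding lead_def by auto
qed

lemma level_of_mixed:
  assumes "mixed j"
  shows "level j \<in> {1..CARD('n)}" "p (lead j) \<notin> F (level j - 1)" "\<not> mixed (level j)"
proof -
  have j: "j \<in> {1..CARD('n)}"
    using assms unfolding mixed_def by simp
  have W_part: "lead j - p (lead j) \<in> W"
    using proj_along[OF decomp] by simp
  have "level j \<noteq> 0"
  proof
    assume "level j = 0"
    then have "lead j \<in> W"
      using lead[OF j] full_flag_bot[OF flag] W_part by auto
    then show False
      using assms lead[OF j] unfolding mixed_def by auto
  qed
  then show lev: "level j \<in> {1..CARD('n)}"
    using lead[OF j] by auto
  show jump: "p (lead j) \<notin> F (level j - 1)"
    using level_le[OF lead(1,2)[OF j], of "level j - 1"] lev by auto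
  show "\<not> mixed (level j)"
    using lead(3)[OF j] jump proj_along(1)[OF decomp] unfolding mixed_def by blast
qed

text \<open>Since p (lead j) jumps at the level k of j, every vector of F k is a multiple of
  p (lead j) modulo F (k - 1).\<close>

lemma level_space_decomp:
  assumes "mixed j" "u \<in> F (level j)"
  obtains c where "u - c *s p (lead j) \<in> F (level j - 1)"
proof -
  have j: "j \<in> {1..CARD('n)}" and k: "level j \<in> {1..CARD('n)}"
    using assms(1) level_of_mixed(1) unfolding mixed_def by auto
  have "vec.subspace (F (level j - 1))"
    using k full_flag_subspace(1)[OF flag, of "level j - 1"] by auto
  then have span_k: "vec.span (F (level j - 1)) = F (level j - 1)"
    by simp
  have "F (level j) = vec.span (insert (p (lead j)) (F (level j - 1)))"
    using full_flag_step[OF flag k span_k lead(3)[OF j] level_of_mixed(2)[OF assms(1)]] ..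
  with assms(2) show ?thesis
    using that unfolding vec.span_insert span_k by auto
qed

text \<open>Distinct mixed steps have distinct levels: otherwise subtracting a suitable
  multiple of the earlier lead vector from the later one lowers its level.\<close>

lemma level_inj: "inj_on level (Collect mixed)"
proof -
  have False if mix: "mixed j" "mixed j'" and same: "level j = level j'" and "j < j'" for j j'
  proof -
    have j': "j' \<in> {1..CARD('n)}" and j: "j \<in> {1..CARD('n)}"
      using mix unfolding mixed_def by auto
    have sub_j': "vec.subspace (F j')" "vec.subspace (F (j' - 1))"
      using j' full_flag_subspace(1)[OF flag] by auto
    obtain c where c: "p (lead j') - c *s p (lead j) \<in> F (level j - 1)"
      using level_space_decomp[OF mix(1)] lead(3)[OF j'] same by metis
    define z where "z = lead j' - c *s lead j"
    have "F j \<subseteq> F (j' - 1)"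
      using full_flag_mono[OF flag, of j "j' - 1"] \<open>j < j'\<close> j' by auto
    then have earlier: "lead j \<in> F (j' - 1)"
      using lead(1)[OF j] by blast
    then have "lead j \<in> F j'"
      using full_flag_mono[OF flag, of "j' - 1" j'] j' by auto
    then have "z \<in> F j'"
      unfolding z_def using lead(1)[OF j'] sub_j'(1) vec.subspace_diff vec.subspace_scale by blast
    moreover have "z \<notin> F (j' - 1)"
      unfolding z_def using notin_subspace_diff_scale[OF sub_j'(2) lead(2)[OF j'] earlier] .
    moreover have "p z \<in> F (level j - 1)"
      using c proj_along_diff_scale[OF decomp] unfolding z_def by simp
    ultimately have "level j' \<le> level j - 1"
      by (rule level_le)
    then show False
      using same level_of_mixed(1)[OF mix(2)] by auto
  qed
  then show ?thesis
    by (metis inj_onI linorder_neqE_nat mem_Collect_eq)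
qed

definition partner :: "nat \<Rightarrow> nat" where
  "partner i = (THE j. mixed j \<and> level j = i)"

lemma partner_level: "mixed j \<Longrightarrow> partner (level j) = j"
  unfolding partner_def by (rule the_equality) (auto dest: inj_onD[OF level_inj])

definition flag_vec :: "nat \<Rightarrow> complex ^ 'n" where
  "flag_vec i =
     (if mixed i then lead i
      else if i \<in> level ` Collect mixed then p (lead (partner i))
      else SOME y. y \<in> F i \<and> y \<notin> F (i - 1) \<and> (y \<in> U \<or> y \<in> W))"

lemma flag_vec_level: "mixed j \<Longrightarrow> flag_vec (level j) = p (lead j)"
  using level_of_mixed(3) partner_level unfolding flag_vec_def by auto

lemma flag_vec_jumps:
  assumes "i \<in> {1..CARD('n)}"
  shows "flag_vec i \<in> F i \<and> flag_vec i \<notin> F (i - 1)"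
    and "\<not> mixed i \<Longrightarrow> flag_vec i \<in> U \<or> flag_vec i \<in> W"
proof -
  consider (mixed) "mixed i" | (level) j where "mixed j" "i = level j"
    | (pure) "\<not> mixed i" "i \<notin> level ` Collect mixed" by blast
  then have "(flag_vec i \<in> F i \<and> flag_vec i \<notin> F (i - 1)) \<and>
             (\<not> mixed i \<longrightarrow> flag_vec i \<in> U \<or> flag_vec i \<in> W)"
  proof cases
    case mixed
    then have "flag_vec i = lead i"
      unfolding flag_vec_def by simp
    then show ?thesis
      using lead(1,2)[OF assms] level_of_mixed(3) mixed by auto
  next
    case level
    then have "flag_vec i = p (lead j)" "j \<in> {1..CARD('n)}"
      using flag_vec_level unfolding mixed_def by auto
    then show ?thesis
      using lead(3) level_of_mixed(2,3) proj_along(1)[OF decomp] level by auto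
  next
    case pure
    then have "\<exists>y. y \<in> F i \<and> y \<notin> F (i - 1) \<and> (y \<in> U \<or> y \<in> W)"
      using assms unfolding mixed_def by blast
    from someI_ex[OF this] show ?thesis
      using pure unfolding flag_vec_def by auto
  qed
  then show "flag_vec i \<in> F i \<and> flag_vec i \<notin> F (i - 1)"
    and "\<not> mixed i \<Longrightarrow> flag_vec i \<in> U \<or> flag_vec i \<in> W" by auto
qed

definition split_basis :: "(complex ^ 'n) set" where
  "split_basis = flag_vec ` {i \<in> {1..CARD('n)}. \<not> mixed i}
                 \<union> (\<lambda>j. lead j - p (lead j)) ` {j \<in> {1..CARD('n)}. mixed j}"

lemma split_basis_compatible: "compatible_decomp split_basis U W"
  unfolding compatible_decomp_def split_basis_def
  using flag_vec_jumps(2) proj_along(2)[OF decomp] by auto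

lemma flag_vec_in_split_basis:
  assumes "i \<in> {1..CARD('n)}"
  shows "flag_vec i \<in> split_basis \<or>
    (\<exists>ej\<in>split_basis. \<exists>ek\<in>split_basis. ej \<in> U \<and> ek \<in> W \<and> flag_vec i = ej + ek)"
proof (cases "mixed i")
  case True
  have "p (lead i) \<in> split_basis"
    using level_of_mixed[OF True] flag_vec_level[OF True, symmetric]
    unfolding split_basis_def by blast
  moreover have "lead i - p (lead i) \<in> split_basis"
    using assms True unfolding split_basis_def by blast
  ultimately show ?thesis
    using True proj_along[OF decomp] unfolding flag_vec_def by force
qed (use assms in \<open>auto simp: split_basis_def\<close>)

lemma split_basis_is_basis: "is_basis split_basis"
proof (rule is_basis_if_spanning_card_le)
  have "flag_vec i \<in> vec.span split_basis" if "i \<in> {1..CARD('n)}" for i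
    using flag_vec_in_split_basis[OF that] by (metis vec.span_add vec.span_base)
  then have "vec.span (flag_vec ` {1..CARD('n)}) \<subseteq> vec.span split_basis"
    by (intro vec.span_minimal) auto
  moreover have "vec.span (flag_vec ` {1..CARD('n)}) = UNIV"
    using full_flag_span_jumps[of F flag_vec, OF flag flag_vec_jumps(1) order_refl] full_flag_top[OF flag]
    by simp
  ultimately show "vec.span split_basis = UNIV"
    by auto
  show "finite split_basis"
    unfolding split_basis_def by simp
  have "card split_basis \<le> card {i \<in> {1..CARD('n)}. \<not> mixed i} + card {j \<in> {1..CARD('n)}. mixed j}"
    unfolding split_basis_def
    by (rule order.trans[OF card_Un_le add_mono[OF card_image_le card_image_le]]) auto
  also have "\<dots> = card ({i \<in> {1..CARD('n)}. \<not> mixed i} \<union> {j \<in> {1..CARD('n)}. mixed j})"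
    by (rule card_Un_disjoint[symmetric]) auto
  also have "\<dots> = card {1..CARD('n)}"
    by (rule arg_cong[where f = card]) blast
  finally show "card split_basis \<le> CARD('n)" by simp
qed

theorem compatible_bases_exist:
  "\<exists>E B. is_basis E \<and> is_basis B \<and> compatible_decomp E U W \<and> compatible_flag B F \<and>
     (\<forall>v\<in>B. v \<in> E \<or> (\<exists>ej\<in>E. \<exists>ek\<in>E. ej \<in> U \<and> ek \<in> W \<and> v = ej + ek))"
proof -
  let ?B = "flag_vec ` {1..CARD('n)}"
  have "is_basis ?B" "compatible_flag ?B F"
    using full_flag_jumps_basis[of F flag_vec, OF flag flag_vec_jumps(1)] by auto
  moreover have "\<forall>v\<in>?B. v \<in> split_basis \<or>
      (\<exists>ej\<in>split_basis. \<exists>ek\<in>split_basis. ej \<in> U \<and> ek \<in> W \<and> v = ej + ek)"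
    using flag_vec_in_split_basis by blast
  ultimately show ?thesis
    using split_basis_is_basis split_basis_compatible by blast
qed

end

theorem lemma1:
  fixes U W :: "(complex ^ 'n) set" and F :: "nat \<Rightarrow> (complex ^ 'n) set"
  assumes "direct_sum_decomp U W"
    and "full_flag F"
  shows "\<exists>E B. is_basis E \<and> is_basis B \<and> compatible_decomp E U W \<and> compatible_flag B F \<and>
           (\<forall>v\<in>B. v \<in> E \<or> (\<exists>ej\<in>E. \<exists>ek\<in>E. ej \<in> U \<and> ek \<in> W \<and> v = ej + ek))"
proof -
  interpret flag_and_decomp U W F
    using assms by unfold_locales
  show ?thesis
    by (rule compatible_bases_exist)
qed

end
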